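(* Let $f$ and $h$ be the sequences defined in the context, and let $\varphi=(1+\sqrt5)/2$. Then: (a) $h$ is nondecreasing on $\mathbb{N}$. (b) $h(n)\le n$ for all $n\ge 0$. (c) $h(n+1)\in\{h(n),h(n)+1\}$ for all $n\ge 0$. (d) For all $n\ge 0$: $h(n+1)=h(n)$ if and only if $f(n+1)=h(n)$. (e) For all $n\ge 0$: $h(n+1)=h(n)+1$ if and only if $f(n+1)=h(n)+n+1$. (f) For all $n\ge 1$: $h(h(n))+h(n+1)=n+2$. (g) For all $n\ge 0$: $f(f(n))=n$. (h) For all $n\ge 1$: $h(h(n)+n)=n+1$. (i) For all $n\ge 1$: $h(n)=\lfloor n\varphi\rfloor-n+1$. (j) There are no three distinct integers $n_1<n_2<n_3$ in $\mathbb{N}$ with $h(n_1)=h(n_2)=h(n_3)$. (k) For all $n\ge 0$: $h(n+2)>h(n)$. (l) $h:\mathbb{N}\to\mathbb{N}$ is surjective. (m) $f:\mathbb{N}\to\mathbb{N}$ is surjective. (n) $f$ is injective. (o) For all $n\ge 6$: $h(n)\le n-2$. (p) For all $n\ge 0$: if $f(n+1)>h(n)$, then $f(j)>h(n)$ for every $j\ge n+1$. (q) There are no integers $k\ge 2$ and $\ell$ such that $f(k-1)=\ell$ and $f(k)=\ell+1$.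
   Context: $\mathbb{N}=\{0,1,2,\dots\}$. The sequence $f:\mathbb{N}\to\mathbb{N}$ is defined greedily: $f(0)=0$, and for $n\ge1$, $f(n)$ is the least natural number such that (i) $f(n)\notin\{f(0),f(1),\dots,f(n-1)\}$ and (ii) $\sum_{1\le i\le n} f(i)$ is divisible by $n$. The sequence $h:\mathbb{N}\to\mathbb{N}$ is defined by $h(0)=0$ and $h(n)=\frac1n\,(f(1)+\cdots+f(n))$ for $n\ge1$ (an integer by (ii)). The first values are $f=0,1,3,2,6,8,4,11,5,14,16,\dots$ and $h=0,1,2,2,3,4,4,5,5,6,7,\dots$. *)

theory Defs
  imports Complex_Main
begin

text \<open>flist n = [f 0, f 1, ..., f n], built greedily: the next value is the least
natural number not yet used such that the sum f 1 + ... + f (n+1) is divisible by n+1.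
(f 0 = 0 contributes nothing to the sum.)\<close>
fun flist :: "nat \<Rightarrow> nat list" where
  "flist 0 = [0]"
| "flist (Suc n) = flist n @
     [LEAST m. m \<notin> set (flist n) \<and> Suc n dvd (sum_list (flist n) + m)]"

definition f :: "nat \<Rightarrow> nat" where
  "f n = flist n ! n"

definition h :: "nat \<Rightarrow> nat" where
  "h n = (if n = 0 then 0 else (\<Sum>i=1..n. f i) div n)"

definition phi :: real where
  "phi = (1 + sqrt 5) / 2"

end

theory Submission
  imports Defs
begin

text \<open>
  Let \<open>\<psi> = 1/\<phi> = \<phi> - 1\<close>. The closed form of \<open>h\<close> is \<open>H n = \<lceil>n\<psi>\<rceil>\<close>; for \<open>n > 0\<close> its
  gap \<open>g = H n - n\<psi>\<close> lies strictly between 0 and 1, because \<open>n\<psi>\<close> is irrational. \<open>H\<close> steps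
  at \<open>n\<close> (\<open>H (n+1) = H n + 1\<close>) iff \<open>g < \<psi>\<close>, and stays otherwise. From \<open>\<psi>\<^sup>2 = 1 - \<psi>\<close> one gets
  \<open>H n \<cdot> \<psi> = n - H n + \<phi> g\<close> and \<open>(H n + n) \<psi> = n + \<psi> g\<close>, which pin down \<open>H (H n)\<close>,
  \<open>H (H n - 1)\<close> and \<open>H (H n + n)\<close> according to whether \<open>H\<close> steps or stays at \<open>n\<close>.
  Consequently the sequence \<open>F\<close> read off from the steps of \<open>H\<close> is an involution with
  \<open>n H n + F (n+1) = (n+1) H (n+1)\<close>, and \<open>F (n+1)\<close> is the least unused value keeping the
  sum divisible by \<open>n+1\<close>. So the greedy \<open>f\<close> is \<open>F\<close>, \<open>h\<close> is \<open>H\<close>, and all the properties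
  are read off from the closed form.
\<close>

definition inv_phi :: real where "inv_phi = phi - 1"

lemma phi_eq: "phi = 1 + inv_phi"
  unfolding inv_phi_def by simp

lemma inv_phi_sq: "inv_phi * inv_phi = 1 - inv_phi"
  unfolding inv_phi_def phi_def by (simp add: field_simps)

lemma inv_phi_bounds: "1/2 < inv_phi" "inv_phi < 2/3"
proof -
  have "2 < sqrt 5" by (rule real_less_rsqrt) simp
  then show "1/2 < inv_phi" unfolding inv_phi_def phi_def by simp
  have "sqrt 5 < 7/3" by (rule real_less_lsqrt) (simp_all add: power2_eq_square)
  then show "inv_phi < 2/3" unfolding inv_phi_def phi_def by simp
qed

lemma phi_mult_inv_phi: "phi * inv_phi = 1"
  using inv_phi_sq unfolding phi_eq by (simp add: algebra_simps)

lemma inv_phi_pos: "0 < inv_phi"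
  using inv_phi_bounds by simp

lemma phi_pos: "0 < phi"
  using inv_phi_pos unfolding phi_eq by simp

lemma sq_add_mult_eq_sq_imp_zero:
  fixes k n :: nat
  assumes "k * k + n * k = n * n"
  shows "n = 0"
  using assms
proof (induction n arbitrary: k rule: less_induct)
  case (less n)
  show ?case
  proof (rule ccontr)
    assume "n \<noteq> 0"
    have "k < n"
    proof (rule ccontr)
      assume "\<not> k < n"
      then have "n * n \<le> k * k" and "0 < n * k" using \<open>n \<noteq> 0\<close> by (simp_all add: mult_le_mono)
      with less.prems show False by linarith
    qed
    then obtain m where n: "n = k + m" by (metis less_imp_add_positive)
    \<comment> \<open>\<open>(m, k) = (n - k, k)\<close> is a smaller solution\<close>
    have "m * m + k * m = k * k"
      using less.prems unfolding n by (simp add: algebra_simps)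
    then have "k = 0" using less.IH \<open>k < n\<close> by blast
    with less.prems \<open>n \<noteq> 0\<close> show False by simp
  qed
qed

lemma mult_inv_phi_eq_nat_imp_zero:
  assumes "real n * inv_phi = real k"
  shows "n = 0"
proof -
  have "real (k * k + n * k) = real n * real n * (inv_phi * inv_phi + inv_phi)"
    unfolding of_nat_add of_nat_mult assms[symmetric] by (simp add: algebra_simps)
  also have "\<dots> = real (n * n)" using inv_phi_sq by simp
  finally have "real (k * k + n * k) = real (n * n)" .
  then show ?thesis by (intro sq_add_mult_eq_sq_imp_zero) (simp only: of_nat_eq_iff)
qed

definition H :: "nat \<Rightarrow> nat" where
  "H n = nat \<lceil>real n * inv_phi\<rceil>"

definition gap :: "nat \<Rightarrow> real" where
  "gap n = real (H n) - real n * inv_phi"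

lemma of_nat_H: "real (H n) = of_int \<lceil>real n * inv_phi\<rceil>"
proof -
  have "0 \<le> real n * inv_phi" using inv_phi_pos by simp
  then have "0 \<le> \<lceil>real n * inv_phi\<rceil>" by simp
  then show ?thesis unfolding H_def by simp
qed

lemma gap_bounds: "0 \<le> gap n" "gap n < 1"
  using ceiling_correct[of "real n * inv_phi"] unfolding gap_def of_nat_H by linarith+

lemma gap_pos:
  assumes "0 < n"
  shows "0 < gap n"
proof -
  have "real n * inv_phi \<noteq> real (H n)" using mult_inv_phi_eq_nat_imp_zero assms by blast
  then show ?thesis using gap_bounds(1)[of n] unfolding gap_def by linarith
qed

lemma H_eqI:
  assumes "real k - 1 < real m * inv_phi" and "real m * inv_phi \<le> real k"
  shows "H m = k"
proof -
  have "\<lceil>real m * inv_phi\<rceil> = int k" by (rule ceiling_unique) (use assms in auto)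
  then show ?thesis unfolding H_def by simp
qed

lemma H_0 [simp]: "H 0 = 0"
  by (simp add: H_def)

lemma H_le: "H n \<le> n"
proof -
  have "real n * inv_phi \<le> real n" using inv_phi_bounds by (simp add: mult_left_le)
  then show ?thesis using gap_bounds(2)[of n] unfolding gap_def by simp
qed

lemma H_Suc: "H (Suc n) = (if gap n < inv_phi then Suc (H n) else H n)"
proof -
  have "real (Suc n) * inv_phi = real (H n) - gap n + inv_phi"
    unfolding gap_def by (simp add: algebra_simps)
  then show ?thesis
    using gap_bounds[of n] inv_phi_bounds by (auto intro!: H_eqI)
qed

lemma H_Suc_0 [simp]: "H (Suc 0) = 1"
  using H_Suc[of 0] inv_phi_pos by (simp add: gap_def)

lemma gap_neq_inv_phi: "gap n \<noteq> inv_phi"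
proof
  assume "gap n = inv_phi"
  then have "H (Suc n) = H n" by (simp add: H_Suc)
  with \<open>gap n = inv_phi\<close> have "gap (Suc n) = 0" unfolding gap_def by (simp add: algebra_simps)
  with gap_pos[of "Suc n"] show False by simp
qed

lemma H_Suc_cases: "H (Suc n) = H n \<or> H (Suc n) = Suc (H n)"
  by (simp add: H_Suc)

lemma H_Suc_eq_iff: "H (Suc n) = H n \<longleftrightarrow> inv_phi < gap n"
  using gap_neq_inv_phi[of n] by (auto simp: H_Suc)

lemma H_Suc_eq_Suc_iff: "H (Suc n) = Suc (H n) \<longleftrightarrow> gap n < inv_phi"
  by (simp add: H_Suc)

lemma mono_H: "mono H"
  unfolding mono_iff_le_Suc using H_Suc_cases by (metis le_refl le_SucI)

lemma H_pos:
  assumes "0 < n"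
  shows "0 < H n"
proof -
  have "0 < real n * inv_phi" using assms inv_phi_pos by simp
  then have "0 < real (H n)" using gap_bounds(1)[of n] unfolding gap_def by linarith
  then show ?thesis by simp
qed

lemma H_mult_inv_phi: "real (H n) * inv_phi = real n - real (H n) + phi * gap n"
proof -
  have "real n * (inv_phi * inv_phi) = real n * (1 - inv_phi)" by (simp only: inv_phi_sq)
  then show ?thesis unfolding gap_def inv_phi_def by (simp add: algebra_simps)
qed

lemma H_add_mult_inv_phi: "real (H n + n) * inv_phi = real n + inv_phi * gap n"
  using H_mult_inv_phi[of n] unfolding gap_def phi_eq by (simp add: algebra_simps)

lemma H_eq_SucI:
  assumes "real m * inv_phi = real k + t" and "0 < t" and "t \<le> 1"
  shows "H m = Suc k"
  by (rule H_eqI) (use assms in simp_all)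

lemma H_H_add: "0 < n \<Longrightarrow> H (H n + n) = Suc n"
  using H_add_mult_inv_phi[of n] gap_pos[of n] gap_bounds[of n] inv_phi_bounds
  by (intro H_eq_SucI[where t = "inv_phi * gap n"]) (auto intro: mult_le_one)

lemma H_Suc_H_add_of_step:
  assumes step: "H (Suc n) = Suc (H n)"
  shows "H (Suc (H n + n)) = Suc n"
proof (rule H_eq_SucI)
  show "real (Suc (H n + n)) * inv_phi = real n + inv_phi * (gap n + 1)"
    using H_add_mult_inv_phi[of n] by (simp add: algebra_simps)
  show "0 < inv_phi * (gap n + 1)" using gap_bounds(1)[of n] inv_phi_pos by simp
  have "gap n < inv_phi" using step H_Suc_eq_Suc_iff by blast
  then have "inv_phi * (gap n + 1) \<le> inv_phi * (inv_phi + 1)" using inv_phi_pos by simp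
  also have "\<dots> = 1" using inv_phi_sq by (simp add: algebra_simps)
  finally show "inv_phi * (gap n + 1) \<le> 1" .
qed

lemma H_H_of_stay:
  assumes stay: "H (Suc n) = H n"
  shows "H (H n) = Suc (Suc (n - H n))"
proof (rule H_eq_SucI)
  show "real (H n) * inv_phi = real (Suc (n - H n)) + (phi * gap n - 1)"
    using H_mult_inv_phi[of n] H_le[of n] by simp
  have "inv_phi < gap n" using stay H_Suc_eq_iff by blast
  then have "phi * inv_phi < phi * gap n" using phi_pos by simp
  then show "0 < phi * gap n - 1" using phi_mult_inv_phi by simp
  have "phi * gap n < phi" using gap_bounds(2)[of n] phi_pos by simp
  then show "phi * gap n - 1 \<le> 1" using inv_phi_bounds phi_eq by linarith
qed

lemma H_pred_H_of_stay:
  assumes stay: "H (Suc n) = H n"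
  shows "H (H n - 1) = Suc (n - H n)"
proof (rule H_eq_SucI)
  have "0 < H n" using stay H_pos[of "Suc n"] by simp
  then show "real (H n - 1) * inv_phi = real (n - H n) + (phi * gap n - inv_phi)"
    using H_mult_inv_phi[of n] H_le[of n] by (simp add: algebra_simps)
  have "inv_phi < gap n" using stay H_Suc_eq_iff by blast
  then have "phi * inv_phi < phi * gap n" using phi_pos by simp
  then show "0 < phi * gap n - inv_phi" using phi_mult_inv_phi inv_phi_bounds by simp
  have "phi * gap n < phi" using gap_bounds(2)[of n] phi_pos by simp
  then show "phi * gap n - inv_phi \<le> 1" using phi_eq by linarith
qed

lemma H_H_of_step:
  assumes step: "H (Suc n) = Suc (H n)" and "0 < n"
  shows "H (H n) = Suc (n - H n)"
proof (rule H_eq_SucI)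
  show "real (H n) * inv_phi = real (n - H n) + phi * gap n"
    using H_mult_inv_phi[of n] H_le[of n] by simp
  show "0 < phi * gap n" using gap_pos[OF \<open>0 < n\<close>] phi_pos by simp
  have "gap n < inv_phi" using step H_Suc_eq_Suc_iff by blast
  then have "phi * gap n < phi * inv_phi" using phi_pos by simp
  then show "phi * gap n \<le> 1" using phi_mult_inv_phi by simp
qed

fun F :: "nat \<Rightarrow> nat" where
  "F 0 = 0"
| "F (Suc n) = (if H (Suc n) = H n then H n else H n + Suc n)"

declare F.simps(2) [simp del]

lemma F_Suc_of_stay [simp]: "H (Suc n) = H n \<Longrightarrow> F (Suc n) = H n"
  by (simp add: F.simps)

lemma F_Suc_of_step [simp]: "H (Suc n) = Suc (H n) \<Longrightarrow> F (Suc n) = H n + Suc n"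
  by (simp add: F.simps)

lemma F_H_of_stay:
  assumes stay: "H (Suc n) = H n"
  shows "F (H n) = Suc n"
proof -
  obtain c where c: "H n = Suc c"
    using H_pos[of "Suc n"] stay by (metis gr0_implies_Suc zero_less_Suc)
  have "H (Suc c) = Suc (Suc (n - H n))" using H_H_of_stay[OF stay] c by simp
  moreover have "H c = Suc (n - H n)" using H_pred_H_of_stay[OF stay] c by simp
  ultimately show ?thesis using c H_le[of n] by simp
qed

lemma F_F: "F (F n) = n"
proof (cases n)
  case (Suc p)
  consider (stay) "H (Suc p) = H p" | (step) "H (Suc p) = Suc (H p)" using H_Suc_cases by blast
  then show ?thesis
  proof cases
    case stay
    then show ?thesis using F_H_of_stay[OF stay] Suc by simp
  next
    case step
    show ?thesis
    proof (cases "p = 0")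
      case False
      then have "H (Suc (H p + p)) = H (H p + p)"
        using H_H_add H_Suc_H_add_of_step[OF step] by simp
      then show ?thesis using step Suc H_H_add False by simp
    qed (use Suc in simp)
  qed
qed simp

lemma bij_F: "bij F"
  using F_F by (rule involuntory_imp_bij)

lemma F_Suc_add: "n * H n + F (Suc n) = Suc n * H (Suc n)"
  using H_Suc_cases[of n] by (elim disjE) simp_all

lemma sum_F: "(\<Sum>i=1..n. F i) = n * H n"
  by (induction n) (simp_all add: F_Suc_add)

lemma sum_list_F: "sum_list (map F [0..<Suc n]) = n * H n"
proof (induction n)
  case (Suc n)
  have "sum_list (map F [0..<Suc (Suc n)]) = sum_list (map F [0..<Suc n]) + F (Suc n)"
    by simp
  then show ?case unfolding Suc.IH F_Suc_add .
qed simp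

lemma H_less_F_after:
  assumes "H n < F (Suc n)" and "Suc n \<le> j"
  shows "H n < F j"
proof -
  have step: "H (Suc n) = Suc (H n)" using assms(1) H_Suc_cases[of n] by auto
  obtain q where j: "j = Suc q" and "n \<le> q" using assms(2) by (metis Suc_le_D Suc_le_mono)
  then have "H n \<le> H q" using mono_H by (simp add: monoD)
  consider "H (Suc q) = H q" | "H (Suc q) = Suc (H q)" using H_Suc_cases by blast
  then show ?thesis
  proof cases
    case 1
    then have "n \<noteq> q" using step by auto
    with \<open>n \<le> q\<close> have "H (Suc n) \<le> H q" using mono_H by (simp add: monoD)
    then show ?thesis using 1 j step by simp
  qed (use j \<open>H n \<le> H q\<close> in simp)
qed

lemma H_mem_F_image:
  assumes "H n < F (Suc n)"
  shows "H n \<in> F ` {..n}"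
proof -
  have "F (H n) \<le> n"
  proof (rule ccontr)
    assume "\<not> F (H n) \<le> n"
    then have "H n < F (F (H n))" using H_less_F_after[OF assms] by simp
    then show False by (simp add: F_F)
  qed
  then show ?thesis using F_F[of "H n"] by (metis atMost_iff image_eqI)
qed

lemma eq_H_of_dvd:
  assumes "Suc n dvd n * H n + m" and "m < H n + Suc n"
  shows "m = H n"
proof -
  have "int (Suc n) dvd int (n * H n + m) - int (Suc n * H n)"
    using assms(1) by (intro dvd_diff) (simp_all only: int_dvd_int_iff dvd_triv_left)
  then have dvd: "int (Suc n) dvd int m - int (H n)" by (simp add: algebra_simps)
  have small: "\<bar>int m - int (H n)\<bar> < \<bar>int (Suc n)\<bar>" using assms(2) H_le[of n] by linarith
  show ?thesis
  proof (rule ccontr)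
    assume "m \<noteq> H n"
    then have "\<bar>int (Suc n)\<bar> \<le> \<bar>int m - int (H n)\<bar>" using dvd by (intro dvd_imp_le_int) simp_all
    with small show False by simp
  qed
qed

lemma Least_eq_F_Suc: "(LEAST m. m \<notin> F ` {..n} \<and> Suc n dvd n * H n + m) = F (Suc n)"
proof (rule Least_equality)
  have "F (Suc n) \<notin> F ` {..n}" using bij_is_inj[OF bij_F] by (auto simp: inj_eq)
  moreover have "Suc n dvd n * H n + F (Suc n)"
    unfolding F_Suc_add by (rule dvd_triv_left)
  ultimately show "F (Suc n) \<notin> F ` {..n} \<and> Suc n dvd n * H n + F (Suc n)" ..
next
  fix m
  assume m: "m \<notin> F ` {..n} \<and> Suc n dvd n * H n + m"
  show "F (Suc n) \<le> m"
  proof (rule ccontr)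
    assume less: "\<not> F (Suc n) \<le> m"
    have "F (Suc n) \<le> H n + Suc n" using H_Suc_cases[of n] by (elim disjE) simp_all
    with m less have "m = H n" by (intro eq_H_of_dvd) simp_all
    with less have "H n < F (Suc n)" by simp
    then show False using H_mem_F_image m \<open>m = H n\<close> by blast
  qed
qed

lemma flist_eq: "flist n = map F [0..<Suc n]"
proof (induction n)
  case (Suc n)
  have "set (map F [0..<Suc n]) = F ` {..n}"
    by (simp only: set_map set_upt atLeast0LessThan lessThan_Suc_atMost)
  then have "flist (Suc n) = map F [0..<Suc n] @ [F (Suc n)]"
    by (simp only: flist.simps Suc.IH sum_list_F Least_eq_F_Suc)
  then show ?case by (simp del: flist.simps)
qed simp

lemma f_eq_F: "f = F"
  by (simp add: fun_eq_iff f_def flist_eq nth_append del: upt_Suc)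

lemma h_eq_H: "h = H"
  unfolding fun_eq_iff h_def f_eq_F sum_F by simp

lemma H_H_add_H_Suc:
  assumes "0 < n"
  shows "H (H n) + H (Suc n) = n + 2"
  using H_Suc_cases[of n]
proof (elim disjE)
  assume stay: "H (Suc n) = H n"
  show ?thesis using H_H_of_stay[OF stay] stay H_le[of n] by simp
next
  assume step: "H (Suc n) = Suc (H n)"
  show ?thesis using H_H_of_step[OF step assms] step H_le[of n] by simp
qed

lemma F_Suc_eq_H_iff: "F (Suc n) = H n \<longleftrightarrow> H (Suc n) = H n"
  using H_Suc_cases[of n] by auto

lemma F_Suc_eq_H_add_iff: "F (Suc n) = Suc (H n + n) \<longleftrightarrow> H (Suc n) = Suc (H n)"
  using H_Suc_cases[of n] by auto

lemma H_eq_floor_mult_phi: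
  assumes "0 < n"
  shows "int (H n) = \<lfloor>real n * phi\<rfloor> - int n + 1"
proof -
  have "real n * phi = real (n + H n - 1) + (1 - gap n)"
    using H_pos[OF assms] unfolding gap_def phi_eq by (simp add: algebra_simps)
  then have "\<lfloor>real n * phi\<rfloor> = int (n + H n - 1)"
    using gap_pos[OF assms] gap_bounds(2)[of n] by (intro floor_unique) simp_all
  then show ?thesis using H_pos[OF assms] by simp
qed

lemma add_two_le_imp_H_less:
  assumes "m + 2 \<le> n"
  shows "H m < H n"
proof -
  have "real (H m) < real m * inv_phi + 1" using gap_bounds(2)[of m] unfolding gap_def by simp
  also have "\<dots> < real (m + 2) * inv_phi" using inv_phi_bounds by (simp add: algebra_simps)
  also have "\<dots> \<le> real (H (m + 2))" using gap_bounds(1)[of "m + 2"] unfolding gap_def by simp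
  finally have "H m < H (m + 2)" by simp
  also have "\<dots> \<le> H n" using assms mono_H by (simp add: monoD)
  finally show ?thesis .
qed

lemma surj_H: "surj H"
proof -
  have "k \<in> range H" for k
  proof -
    consider "k = 0" | "k = Suc 0" | n where "k = Suc n" "0 < n"
      by (metis neq0_conv not0_implies_Suc)
    then show ?thesis
      by cases (metis H_0 H_Suc_0 H_H_add One_nat_def rangeI)+
  qed
  then show ?thesis by blast
qed

lemma H_le_diff_two:
  assumes "6 \<le> n"
  shows "H n \<le> n - 2"
proof -
  have "real n * inv_phi \<le> real n - 2"
    using mult_right_mono[of 6 "real n" "1 - inv_phi"] assms inv_phi_bounds
    by (simp add: algebra_simps)
  then have "real (H n) < real n - 1" using gap_bounds(2)[of n] unfolding gap_def by simp
  then show ?thesis by linarith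
qed

lemma F_Suc_Suc_neq: "F (Suc (Suc n)) \<noteq> Suc (F (Suc n))"
  using H_Suc_cases[of n] H_Suc_cases[of "Suc n"] by auto

theorem theorem2:
  shows "mono h
    \<and> (\<forall>n. h n \<le> n)
    \<and> (\<forall>n. h (n+1) \<in> {h n, h n + 1})
    \<and> (\<forall>n. h (n+1) = h n \<longleftrightarrow> f (n+1) = h n)
    \<and> (\<forall>n. h (n+1) = h n + 1 \<longleftrightarrow> f (n+1) = h n + n + 1)
    \<and> (\<forall>n\<ge>1. h (h n) + h (n+1) = n + 2)
    \<and> (\<forall>n. f (f n) = n)
    \<and> (\<forall>n\<ge>1. h (h n + n) = n + 1)
    \<and> (\<forall>n\<ge>1. int (h n) = \<lfloor>real n * phi\<rfloor> - int n + 1)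
    \<and> \<not> (\<exists>n1 n2 n3. n1 < n2 \<and> n2 < n3 \<and> h n1 = h n2 \<and> h n2 = h n3)
    \<and> (\<forall>n. h (n+2) > h n)
    \<and> surj h
    \<and> surj f
    \<and> inj f
    \<and> (\<forall>n\<ge>6. h n \<le> n - 2)
    \<and> (\<forall>n. f (n+1) > h n \<longrightarrow> (\<forall>j\<ge>n+1. f j > h n))
    \<and> \<not> (\<exists>k l. k \<ge> 2 \<and> f (k-1) = l \<and> f k = l + 1)"
  unfolding f_eq_F h_eq_H
proof (intro conjI allI impI notI)
  assume "\<exists>n1 n2 n3. n1 < n2 \<and> n2 < n3 \<and> H n1 = H n2 \<and> H n2 = H n3"
  then obtain n1 n2 n3 where "n1 < n2" "n2 < n3" "H n1 = H n3" by auto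
  then show False using add_two_le_imp_H_less[of n1 n3] by simp
next
  assume "\<exists>k l. 2 \<le> k \<and> F (k - 1) = l \<and> F k = l + 1"
  then show False using F_Suc_Suc_neq by (metis add_2_eq_Suc le_Suc_ex Suc_eq_plus1 diff_Suc_1)
qed (simp_all add: mono_H H_le H_Suc_cases F_Suc_eq_H_iff F_Suc_eq_H_add_iff H_H_add_H_Suc F_F
  H_H_add H_eq_floor_mult_phi add_two_le_imp_H_less surj_H bij_is_surj[OF bij_F] bij_is_inj[OF bij_F]
  H_le_diff_two H_less_F_after)

end
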